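(* Let $X_1,\ldots,X_n$ be i.i.d. from $P$ on $\mathbb{R}^d$ satisfying (A1), (A2), (A3) and (A4') (see context). For a fixed point $x$, let $\delta(x)=\min\{\|X_i-x\|: p(X_i)>p(x)\}$ (with $\delta(x)=L$, a fixed positive constant, if no such $X_i$ exists). If $x$ is not a mode of $p$, then $n\,\delta^d(x)$ converges in distribution to an exponential random variable with rate parameter $p(x)\,\tau\,v_d$, where $v_d$ is the volume of the unit ball in $\mathbb{R}^d$. If $x$ is a mode, then $n\,\delta^d(x)\to\infty$.
   Context: (A1) $P$ is supported on a compact set $\mathcal{C}$ with bounded continuous density $p$, $\inf_{x\in\mathcal{C}}p(x)\ge a>0$. (A2) $p$ has bounded continuous first, second and third derivatives. (A3) $p$ is Morse (Hessian nondegenerate at every critical point) with finitely many critical points. A mode is a strict local maximum of $p$; $\mathcal{M}$ is the set of modes. (A4') With $L_x=\{y:p(y)>p(x)\}$ and $\mu$ Lebesgue measure: there exists $\tau\in(0,1)$ such that for every $x\notin\mathcal{M}$, $\lim_{t\to0}\mu(L_x\cap B(x,t))/\mu(B(x,t))=\tau$. *)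

theory Defs
  imports "HOL-Probability.Probability"
begin

definition is_mode :: "('a::metric_space \<Rightarrow> real) \<Rightarrow> 'a \<Rightarrow> bool" where
  "is_mode p x \<longleftrightarrow> (\<exists>e>0. \<forall>y. y \<noteq> x \<and> dist y x < e \<longrightarrow> p y < p x)"

text \<open>delta(x) for the sample X_0, ..., X_(n-1) (indices shifted by one);
  equals L if no sample point has higher density than x.\<close>
definition nn_higher_dist ::
  "('a::real_normed_vector \<Rightarrow> real) \<Rightarrow> real \<Rightarrow> 'a \<Rightarrow> (nat \<Rightarrow> 'b \<Rightarrow> 'a) \<Rightarrow> nat \<Rightarrow> 'b \<Rightarrow> real" where
  "nn_higher_dist p L x X n \<omega> =
     (if \<exists>i<n. p (X i \<omega>) > p x
      then Min {norm (X i \<omega> - x) | i. i < n \<and> p (X i \<omega>) > p x}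
      else L)"

end

theory Submission
  imports Defs
begin

(* Write H = {z. p x < p z}. For r < L, nn_higher_dist is at most r exactly when one of the
   first n samples falls into H \<inter> cball x r, so by independence
   P(n \<delta>^d \<le> s) = 1 - (1 - q\<^sub>n)^n, where q\<^sub>n is the P-mass of H \<inter> cball x (s/n)^(1/d).
   Continuity of p at x and (A4') give n q\<^sub>n \<rightarrow> p(x) \<tau> v\<^sub>d s, hence the exponential CDF
   1 - exp (- p(x) \<tau> v\<^sub>d s) in the limit. At a mode, H misses a punctured neighbourhood of x,
   so \<delta> is bounded below and n \<delta>^d \<rightarrow> \<infinity>. *)

lemma tendsto_one_minus_power_exp:
  fixes q :: "nat \<Rightarrow> real"
  assumes lim: "(\<lambda>n. real n * q n) \<longlonglongrightarrow> t"
  shows "(\<lambda>n. (1 - q n) ^ n) \<longlonglongrightarrow> exp (- t)"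
proof -
  have "(\<lambda>n. (real n * q n) * inverse (real n)) \<longlonglongrightarrow> t * 0"
    by (intro tendsto_mult lim tendsto_inverse_0_at_top filterlim_real_sequentially)
  moreover have "eventually (\<lambda>n. (real n * q n) * inverse (real n) = q n) sequentially"
    using eventually_gt_at_top[of "0::nat"] by eventually_elim auto
  ultimately have q0: "q \<longlonglongrightarrow> 0"
    by (simp add: tendsto_cong)
  then have small: "eventually (\<lambda>n. \<bar>q n\<bar> \<le> 1/2) sequentially"
    by (rule order_tendstoD(2)[OF tendsto_rabs_zero, of _ _ "1/2", THEN eventually_mono]) auto
  \<comment> \<open>\<open>(1 - q n) ^ n = exp (n ln (1 - q n))\<close>, and \<open>n ln (1 - q n) + n q n = O(n q n\<^sup>2) \<rightarrow> 0\<close>\<close>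
  define e where "e n = real n * (ln (1 - q n) + q n)" for n
  have "e \<longlonglongrightarrow> 0"
  proof (rule Lim_null_comparison)
    show "eventually (\<lambda>n. norm (e n) \<le> 2 * \<bar>real n * q n\<bar> * \<bar>q n\<bar>) sequentially"
      using small
    proof eventually_elim
      case (elim n)
      have "\<bar>ln (1 + - q n) - - q n\<bar> \<le> 2 * (- q n)\<^sup>2"
        by (rule abs_ln_one_plus_x_minus_x_bound) (use elim in auto)
      then have "real n * \<bar>ln (1 - q n) + q n\<bar> \<le> real n * (2 * (q n)\<^sup>2)"
        by (intro mult_left_mono) auto
      moreover have "real n * (2 * (q n)\<^sup>2) = 2 * \<bar>real n * q n\<bar> * \<bar>q n\<bar>"
        by (simp add: abs_mult power2_eq_square)
      ultimately show ?case
        by (simp add: e_def abs_mult)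
    qed
    show "(\<lambda>n. 2 * \<bar>real n * q n\<bar> * \<bar>q n\<bar>) \<longlonglongrightarrow> 0"
      using tendsto_mult[OF tendsto_mult[OF tendsto_const[of 2] tendsto_rabs[OF lim]] tendsto_rabs_zero[OF q0]]
      by simp
  qed
  then have "(\<lambda>n. exp (e n - real n * q n)) \<longlonglongrightarrow> exp (0 - t)"
    by (intro tendsto_intros lim)
  moreover have "eventually (\<lambda>n. exp (e n - real n * q n) = (1 - q n) ^ n) sequentially"
    using small
  proof eventually_elim
    case (elim n)
    then have "0 < 1 - q n"
      by auto
    have "exp (e n - real n * q n) = exp (ln (1 - q n)) ^ n"
      by (simp add: e_def algebra_simps flip: exp_of_nat_mult)
    also have "\<dots> = (1 - q n) ^ n"
      using \<open>0 < 1 - q n\<close> by simp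
    finally show ?case .
  qed
  ultimately show ?thesis
    by (simp add: tendsto_cong)
qed

lemma measure_density_approx:
  fixes f :: "'a \<Rightarrow> real"
  assumes f: "f \<in> borel_measurable M" "\<And>z. 0 \<le> f z"
    and A: "A \<in> sets M" "emeasure M A < \<infinity>"
    and c: "0 \<le> c" and \<epsilon>: "0 \<le> \<epsilon>"
    and close: "\<And>z. z \<in> A \<Longrightarrow> \<bar>f z - c\<bar> \<le> \<epsilon>"
  shows "\<bar>measure (density M f) A - c * measure M A\<bar> \<le> \<epsilon> * measure M A"
proof -
  define m where "m = measure M A"
  have A_eq: "emeasure M A = ennreal m"
    using A by (simp add: m_def emeasure_eq_ennreal_measure)
  have cmult: "(\<integral>\<^sup>+ z. ennreal b * indicator A z \<partial>M) = ennreal (b * m)" if "0 \<le> b" for b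
    using A that by (simp add: nn_integral_cmult_indicator A_eq ennreal_mult m_def)
  have density_eq: "emeasure (density M f) A = (\<integral>\<^sup>+ z. ennreal (f z) * indicator A z \<partial>M)"
    using f A by (simp add: emeasure_density)
  have "emeasure (density M f) A \<le> (\<integral>\<^sup>+ z. ennreal (c + \<epsilon>) * indicator A z \<partial>M)"
    unfolding density_eq
    by (intro nn_integral_mono) (auto split: split_indicator intro!: ennreal_leI dest!: close)
  also have "\<dots> = ennreal ((c + \<epsilon>) * m)"
    using c \<epsilon> by (intro cmult) simp
  finally have upper: "emeasure (density M f) A \<le> ennreal ((c + \<epsilon>) * m)" .
  have "ennreal (max 0 (c - \<epsilon>) * m) = (\<integral>\<^sup>+ z. ennreal (max 0 (c - \<epsilon>)) * indicator A z \<partial>M)"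
    by (rule cmult[symmetric]) simp
  also have "\<dots> \<le> emeasure (density M f) A"
    unfolding density_eq
    by (intro nn_integral_mono) (auto split: split_indicator intro!: ennreal_leI dest!: close simp: f)
  finally have lower: "ennreal (max 0 (c - \<epsilon>) * m) \<le> emeasure (density M f) A" .
  have "emeasure (density M f) A = ennreal (measure (density M f) A)"
    using upper by (intro emeasure_eq_ennreal_measure) (auto simp: top_unique)
  moreover have "0 \<le> m" by (simp add: m_def)
  ultimately have "measure (density M f) A \<le> (c + \<epsilon>) * m" "max 0 (c - \<epsilon>) * m \<le> measure (density M f) A"
    using upper lower c \<epsilon> by (simp_all add: ennreal_le_iff)
  moreover have "(c - \<epsilon>) * m \<le> max 0 (c - \<epsilon>) * m"
    using \<open>0 \<le> m\<close> by (intro mult_right_mono) auto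
  ultimately show ?thesis
    by (auto simp: m_def algebra_simps abs_le_iff)
qed

lemma measure_inter_cball_eq_inter_ball:
  fixes x :: "'a::euclidean_space"
  assumes "S \<in> sets lborel"
  shows "measure lborel (S \<inter> cball x r) = measure lborel (S \<inter> ball x r)"
proof -
  have "S \<inter> sphere x r \<in> null_sets lborel"
    by (rule null_sets_subset[of "sphere x r"])
       (use assms negligible_sphere[of x r] in
         \<open>auto simp: null_sets_completion_iff negligible_iff_null_sets negligible_convex_frontier\<close>)
  moreover have "S \<inter> cball x r = (S \<inter> ball x r) \<union> (S \<inter> sphere x r)"
    by auto
  ultimately show ?thesis
    using assms by (simp add: measure_Un_null_set)
qed

lemma measure_inter_cball_over_power_tendsto:
  fixes x :: "'a::euclidean_space"
  assumes S: "S \<in> sets lborel"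
    and frac: "((\<lambda>r. measure lborel (S \<inter> ball x r) / measure lborel (ball x r)) \<longlongrightarrow> \<tau>) (at_right 0)"
  shows "((\<lambda>r. measure lborel (S \<inter> cball x r) / r ^ DIM('a))
           \<longlongrightarrow> \<tau> * measure lborel (ball (0::'a) 1)) (at_right 0)"
proof -
  have "eventually (\<lambda>r. measure lborel (S \<inter> ball x r) / measure lborel (ball x r)
      * measure lborel (ball (0::'a) 1) = measure lborel (S \<inter> cball x r) / r ^ DIM('a)) (at_right 0)"
    using eventually_at_right_less[of "0::real"]
  proof eventually_elim
    case (elim r)
    then show ?case
      using content_ball_conv_unit_ball[of r x] content_ball_pos[of 1 "0::'a"] S
      by (simp add: measure_inter_cball_eq_inter_ball)
  qed
  with tendsto_mult_right[OF frac] show ?thesis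
    by (rule Lim_transform_eventually)
qed

lemma measure_density_inter_cball_near:
  fixes p :: "'a::euclidean_space \<Rightarrow> real"
  assumes p: "p \<in> borel_measurable borel" "\<And>y. 0 \<le> p y"
    and S: "S \<in> sets borel" and cont: "continuous (at x within S) p" and "0 < \<epsilon>"
  shows "eventually (\<lambda>r. \<bar>measure (density lborel p) (S \<inter> cball x r)
                              - p x * measure lborel (S \<inter> cball x r)\<bar>
                          \<le> \<epsilon> * measure lborel (S \<inter> cball x r)) (at_right 0)"
proof -
  obtain d where d: "0 < d" "\<And>z. z \<in> S \<Longrightarrow> dist z x < d \<Longrightarrow> dist (p z) (p x) < \<epsilon>"
    using cont \<open>0 < \<epsilon>\<close> unfolding continuous_within_eps_delta by blast
  show ?thesis
    unfolding eventually_at_right_field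
  proof (intro exI[of _ d] conjI allI impI)
    fix r :: real
    assume "0 < r" "r < d"
    show "\<bar>measure (density lborel p) (S \<inter> cball x r) - p x * measure lborel (S \<inter> cball x r)\<bar>
          \<le> \<epsilon> * measure lborel (S \<inter> cball x r)"
    proof (rule measure_density_approx)
      show "emeasure lborel (S \<inter> cball x r) < \<infinity>"
        by (rule emeasure_bounded_finite) (meson bounded_cball bounded_subset inf_le2)
      fix z
      assume "z \<in> S \<inter> cball x r"
      then show "\<bar>p z - p x\<bar> \<le> \<epsilon>"
        using d(2)[of z] \<open>r < d\<close> by (auto simp: dist_real_def dist_commute)
    qed (use p S \<open>0 < \<epsilon>\<close> in auto)
  qed (use d in auto)
qed

lemma measure_density_inter_cball_tendsto:
  fixes p :: "'a::euclidean_space \<Rightarrow> real"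
  assumes p: "p \<in> borel_measurable borel" "\<And>y. 0 \<le> p y"
    and S: "S \<in> sets borel"
    and cont: "continuous (at x within S) p"
    and frac: "((\<lambda>r. measure lborel (S \<inter> ball x r) / measure lborel (ball x r)) \<longlongrightarrow> \<tau>) (at_right 0)"
  shows "((\<lambda>r. measure (density lborel p) (S \<inter> cball x r) / r ^ DIM('a))
           \<longlongrightarrow> p x * \<tau> * measure lborel (ball (0::'a) 1)) (at_right 0)"
proof -
  define v where "v = measure lborel (ball (0::'a) 1)"
  define \<Lambda> where "\<Lambda> r = measure lborel (S \<inter> cball x r)" for r
  define Q where "Q r = measure (density lborel p) (S \<inter> cball x r)" for r
  have "0 < v"
    by (simp add: v_def content_ball_pos)
  have \<Lambda>_le: "\<Lambda> r \<le> v * r ^ DIM('a)" if "0 \<le> r" for r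
  proof -
    have "\<Lambda> r \<le> measure lborel (cball x r)"
      unfolding \<Lambda>_def by (rule measure_mono_fmeasurable) (use S in \<open>auto intro: fmeasurable_compact\<close>)
    also have "\<dots> = v * r ^ DIM('a)"
      using content_ball_conv_unit_ball[OF that, of x] by (simp add: v_def content_cball_conv_ball)
    finally show ?thesis .
  qed
  have "((\<lambda>r. (Q r - p x * \<Lambda> r) / r ^ DIM('a)) \<longlongrightarrow> 0) (at_right 0)"
    unfolding tendsto_iff
  proof (intro allI impI)
    fix e :: real
    assume "0 < e"
    with \<open>0 < v\<close> have "eventually (\<lambda>r. \<bar>Q r - p x * \<Lambda> r\<bar> \<le> e / (2 * v) * \<Lambda> r) (at_right 0)"
      unfolding Q_def \<Lambda>_def by (intro measure_density_inter_cball_near p S cont) simp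
    with eventually_at_right_less[of "0::real"]
    show "eventually (\<lambda>r. dist ((Q r - p x * \<Lambda> r) / r ^ DIM('a)) 0 < e) (at_right 0)"
    proof eventually_elim
      case (elim r)
      have "\<bar>Q r - p x * \<Lambda> r\<bar> \<le> e / (2 * v) * \<Lambda> r"
        using elim by simp
      also have "\<dots> \<le> e / (2 * v) * (v * r ^ DIM('a))"
        using \<Lambda>_le[of r] elim \<open>0 < e\<close> \<open>0 < v\<close> by (intro mult_left_mono) auto
      also have "\<dots> < e * r ^ DIM('a)"
        using elim \<open>0 < e\<close> \<open>0 < v\<close> by simp
      finally show ?case
        using elim by (simp add: abs_divide pos_divide_less_eq)
    qed
  qed
  from tendsto_add[OF this tendsto_mult_left[OF measure_inter_cball_over_power_tendsto[OF _ frac], of "p x"]]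
  show ?thesis
    using S by (simp add: Q_def \<Lambda>_def v_def diff_divide_distrib mult_ac)
qed

lemma tendsto_real_times_at_root_over_n:
  fixes g :: "real \<Rightarrow> real"
  assumes g: "((\<lambda>r. g r / r ^ k) \<longlongrightarrow> c) (at_right 0)" and "0 < k" "0 < s"
  shows "(\<lambda>n. real n * g (root k (s / real n))) \<longlonglongrightarrow> s * c"
proof -
  define r where "r n = root k (s / real n)" for n
  have "r \<longlonglongrightarrow> 0"
    using tendsto_real_root[OF lim_const_over_n[of s], of k] by (simp add: r_def[abs_def])
  moreover have "eventually (\<lambda>n. 0 < r n) sequentially"
    using eventually_gt_at_top[of "0::nat"] by eventually_elim (use assms in \<open>simp add: r_def\<close>)
  ultimately have "filterlim r (at_right 0) sequentially"
    by (rule tendsto_imp_filterlim_at_right)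
  from tendsto_mult_left[OF filterlim_compose[OF g this], of s]
  have "(\<lambda>n. s * (g (r n) / r n ^ k)) \<longlonglongrightarrow> s * c" .
  moreover have "eventually (\<lambda>n. s * (g (r n) / r n ^ k) = real n * g (r n)) sequentially"
    using eventually_gt_at_top[of "0::nat"]
    by eventually_elim (use assms in \<open>simp add: r_def\<close>)
  ultimately show ?thesis
    unfolding r_def by (rule Lim_transform_eventually)
qed

lemma nn_higher_dist_le_iff:
  "nn_higher_dist p L x X n \<omega> \<le> r \<longleftrightarrow>
     (\<exists>i<n. X i \<omega> \<in> {z. p x < p z} \<inter> cball x r) \<or> ((\<forall>i<n. p (X i \<omega>) \<le> p x) \<and> L \<le> r)"
proof (cases "\<exists>i<n. p x < p (X i \<omega>)")
  case True
  let ?D = "{norm (X i \<omega> - x) | i. i < n \<and> p x < p (X i \<omega>)}"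
  have "?D \<subseteq> (\<lambda>i. norm (X i \<omega> - x)) ` {..<n}"
    by auto
  then have "finite ?D"
    by (rule finite_subset) auto
  moreover have "?D \<noteq> {}"
    using True by auto
  ultimately show ?thesis
    using True by (auto simp: nn_higher_dist_def Min_le_iff dist_norm norm_minus_commute)
qed (auto simp: nn_higher_dist_def)

lemma nn_higher_dist_pos:
  assumes "0 < L"
  shows "0 < nn_higher_dist p L x X n \<omega>"
  using nn_higher_dist_le_iff[of p L x X n \<omega> 0] assms by (auto simp: not_le)

lemma borel_measurable_nn_higher_dist:
  fixes X :: "nat \<Rightarrow> 'b \<Rightarrow> 'a::euclidean_space"
  assumes p: "p \<in> borel_measurable borel" and X: "\<And>i. X i \<in> borel_measurable M"
  shows "(\<lambda>\<omega>. nn_higher_dist p L x X n \<omega>) \<in> borel_measurable M"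
  unfolding borel_measurable_iff_le
proof
  fix r
  define H where "H = {z. p x < p z}"
  have H: "H \<in> sets borel"
    unfolding H_def using p by measurable
  have "{\<omega> \<in> space M. nn_higher_dist p L x X n \<omega> \<le> r} =
      (\<Union>i<n. X i -` (H \<inter> cball x r) \<inter> space M) \<union>
      (if L \<le> r then space M - (\<Union>i<n. X i -` H \<inter> space M) else {})"
    by (auto simp: nn_higher_dist_le_iff H_def)
  also have "\<dots> \<in> sets M"
  proof -
    have "(\<Union>i<n. X i -` (H \<inter> cball x r) \<inter> space M) \<in> sets M"
      using H by (intro sets.finite_UN measurable_sets[OF X]) auto
    moreover have "space M - (\<Union>i<n. X i -` H \<inter> space M) \<in> sets M"
      using H by (intro sets.Diff sets.top sets.finite_UN measurable_sets[OF X]) auto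
    ultimately show ?thesis
      by simp
  qed
  finally show "{\<omega> \<in> space M. nn_higher_dist p L x X n \<omega> \<le> r} \<in> sets M" .
qed

lemma (in prob_space) prob_nn_higher_dist_le:
  fixes X :: "nat \<Rightarrow> 'a \<Rightarrow> 'd::euclidean_space"
  assumes X: "\<And>i. X i \<in> borel_measurable M" and indep: "indep_vars (\<lambda>_. borel) X UNIV"
    and distr: "\<And>i. distr M borel (X i) = P"
    and p: "p \<in> borel_measurable borel" and "r < L"
  shows "prob {\<omega> \<in> space M. nn_higher_dist p L x X n \<omega> \<le> r} =
           1 - (1 - measure P ({z. p x < p z} \<inter> cball x r)) ^ n"
proof (cases "n = 0")
  case True
  then show ?thesis
    using \<open>r < L\<close> by (simp add: nn_higher_dist_def)
next
  case False
  define A where "A = {z. p x < p z} \<inter> cball x r"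
  have A: "A \<in> sets borel" "- A \<in> sets borel"
    unfolding A_def using p by measurable
  have miss: "prob (X i -` (- A) \<inter> space M) = 1 - measure P A" for i
  proof -
    have "X i -` (- A) \<inter> space M = space M - (X i -` A \<inter> space M)"
      by auto
    then show ?thesis
      using prob_compl[OF measurable_sets[OF X A(1)]] measure_distr[OF X A(1), unfolded distr]
      by simp
  qed
  have "{\<omega> \<in> space M. nn_higher_dist p L x X n \<omega> \<le> r} = space M - (\<Inter>i<n. X i -` (- A) \<inter> space M)"
    using \<open>r < L\<close> by (auto simp: nn_higher_dist_le_iff A_def)
  moreover have "prob (\<Inter>i<n. X i -` (- A) \<inter> space M) = (1 - measure P A) ^ n"
  proof -
    have "prob (\<Inter>i<n. X i -` (- A) \<inter> space M) = (\<Prod>i<n. prob (X i -` (- A) \<inter> space M))"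
      using A False by (intro indep_varsD[OF indep]) auto
    then show ?thesis
      by (simp only: miss prod_constant card_lessThan)
  qed
  moreover have "(\<Inter>i<n. X i -` (- A) \<inter> space M) \<in> events"
    using A False by (intro sets.finite_INT measurable_sets[OF X]) auto
  ultimately show ?thesis
    by (simp add: prob_compl A_def)
qed

lemma cdf_exponential_density:
  assumes "0 < c"
  shows "cdf (density lborel (exponential_density c)) s = (if 0 \<le> s then 1 - exp (- c * s) else 0)"
proof -
  have "measure (density lborel (exponential_density c)) {..s} = erlang_CDF 0 c s"
    using emeasure_erlang_density[OF assms] erlang_CDF_nonneg[OF assms] by (simp add: measure_def)
  then show ?thesis
    by (simp add: cdf_def erlang_CDF_0)
qed

lemma scaled_nn_higher_dist_le_iff:
  assumes "0 < L" and "0 < n" and "0 < k"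
  shows "real n * nn_higher_dist p L x X n \<omega> ^ k \<le> s \<longleftrightarrow>
           nn_higher_dist p L x X n \<omega> \<le> root k (s / real n)"
proof -
  let ?\<delta> = "nn_higher_dist p L x X n \<omega>"
  have "real n * ?\<delta> ^ k \<le> s \<longleftrightarrow> root k (?\<delta> ^ k) \<le> root k (s / real n)"
    using assms by (simp add: pos_le_divide_eq mult.commute)
  moreover have "root k (?\<delta> ^ k) = ?\<delta>"
    using nn_higher_dist_pos[OF \<open>0 < L\<close>, of p x X n \<omega>] \<open>0 < k\<close> by (intro real_root_power_cancel) auto
  ultimately show ?thesis
    by simp
qed

lemma (in prob_space) cdf_scaled_nn_higher_dist:
  fixes X :: "nat \<Rightarrow> 'a \<Rightarrow> 'd::euclidean_space"
  assumes X: "\<And>i. X i \<in> borel_measurable M" and indep: "indep_vars (\<lambda>_. borel) X UNIV"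
    and distr: "\<And>i. distr M borel (X i) = P"
    and p: "p \<in> borel_measurable borel" and "0 < L" and "0 < n"
    and r: "root DIM('d) (s / real n) < L"
  shows "cdf (distr M borel (\<lambda>\<omega>. real n * nn_higher_dist p L x X n \<omega> ^ DIM('d))) s =
           1 - (1 - measure P ({z. p x < p z} \<inter> cball x (root DIM('d) (s / real n)))) ^ n"
proof -
  note [measurable] = borel_measurable_nn_higher_dist[OF p X]
  have "cdf (distr M borel (\<lambda>\<omega>. real n * nn_higher_dist p L x X n \<omega> ^ DIM('d))) s =
      prob ((\<lambda>\<omega>. real n * nn_higher_dist p L x X n \<omega> ^ DIM('d)) -` {..s} \<inter> space M)"
    unfolding cdf_def by (rule measure_distr) auto
  also have "\<dots> = prob {\<omega> \<in> space M. nn_higher_dist p L x X n \<omega> \<le> root DIM('d) (s / real n)}"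
    using \<open>0 < L\<close> \<open>0 < n\<close> by (auto simp: scaled_nn_higher_dist_le_iff intro!: arg_cong[where f = prob])
  finally show ?thesis
    using prob_nn_higher_dist_le[OF X indep distr p r] by simp
qed

lemma (in prob_space) weak_conv_scaled_nn_higher_dist:
  fixes X :: "nat \<Rightarrow> 'a \<Rightarrow> 'd::euclidean_space"
  assumes X: "\<And>i. X i \<in> borel_measurable M" and indep: "indep_vars (\<lambda>_. borel) X UNIV"
    and distr: "\<And>i. distr M borel (X i) = P"
    and p: "p \<in> borel_measurable borel" and "0 < L" and "0 < c"
    and ratio: "((\<lambda>r. measure P ({z. p x < p z} \<inter> cball x r) / r ^ DIM('d)) \<longlongrightarrow> c) (at_right 0)"
  shows "weak_conv_m (\<lambda>n. distr M borel (\<lambda>\<omega>. real n * nn_higher_dist p L x X n \<omega> ^ DIM('d)))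
           (density lborel (exponential_density c))"
proof -
  let ?q = "\<lambda>r. measure P ({z. p x < p z} \<inter> cball x r)"
  define r where "r s n = root DIM('d) (s / real n)" for s n
  have cdf: "eventually (\<lambda>n. 1 - (1 - ?q (r s n)) ^ n =
      cdf (distr M borel (\<lambda>\<omega>. real n * nn_higher_dist p L x X n \<omega> ^ DIM('d))) s) sequentially" for s
  proof -
    have "r s \<longlonglongrightarrow> 0"
      using tendsto_real_root[OF lim_const_over_n[of s], of "DIM('d)"] by (simp add: r_def[abs_def])
    then have "eventually (\<lambda>n. r s n < L) sequentially"
      using \<open>0 < L\<close> by (rule order_tendstoD(2))
    with eventually_gt_at_top[of "0::nat"] show ?thesis
      by eventually_elim (simp add: cdf_scaled_nn_higher_dist[OF X indep distr p \<open>0 < L\<close>] r_def)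
  qed
  have "(\<lambda>n. 1 - (1 - ?q (r s n)) ^ n) \<longlonglongrightarrow> (if 0 \<le> s then 1 - exp (- c * s) else 0)" for s
  proof (cases "0 < s")
    case True
    have "(\<lambda>n. 1 - (1 - ?q (r s n)) ^ n) \<longlonglongrightarrow> 1 - exp (- (s * c))"
      unfolding r_def
      by (intro tendsto_diff tendsto_const tendsto_one_minus_power_exp
          tendsto_real_times_at_root_over_n[OF ratio] True) simp
    then show ?thesis
      using True by (simp add: mult.commute)
  next
    case False
    then have "r s n \<le> 0" for n
      by (simp add: r_def divide_nonpos_nonneg)
    then have "{z. p x < p z} \<inter> cball x (r s n) = {}" for n
      using dist_pos_lt[of x] by (force dest: order_trans[OF _ \<open>r s n \<le> 0\<close>])
    then show ?thesis
      using False by (simp add: not_less)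
  qed
  then show ?thesis
    unfolding weak_conv_m_def weak_conv_def cdf_exponential_density[OF \<open>0 < c\<close>]
    using cdf by (blast intro: Lim_transform_eventually)
qed

lemma nn_higher_dist_lower_bound_at_mode:
  assumes "is_mode p x" and "0 < L"
  obtains m where "0 < m" "\<And>n \<omega>. m \<le> nn_higher_dist p L x X n \<omega>"
proof -
  obtain e where e: "0 < e" "\<And>y. y \<noteq> x \<Longrightarrow> dist y x < e \<Longrightarrow> p y < p x"
    using assms(1) unfolding is_mode_def by blast
  have "min e L \<le> nn_higher_dist p L x X n \<omega>" for n \<omega>
  proof (rule ccontr)
    let ?\<delta> = "nn_higher_dist p L x X n \<omega>"
    assume short: "\<not> min e L \<le> ?\<delta>"
    consider i where "p x < p (X i \<omega>)" "dist x (X i \<omega>) \<le> ?\<delta>" | "L \<le> ?\<delta>"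
      using nn_higher_dist_le_iff[of p L x X n \<omega> ?\<delta>] by auto
    then show False
    proof cases
      case 1
      then have "X i \<omega> \<noteq> x" "dist (X i \<omega>) x < e"
        using short by (auto simp: dist_commute)
      then show False
        using e(2) 1(1) by fastforce
    next
      case 2
      then show False
        using short by simp
    qed
  qed
  moreover have "0 < min e L"
    using e(1) \<open>0 < L\<close> by simp
  ultimately show ?thesis
    using that by blast
qed

lemma measure_scaled_nn_higher_dist_le_at_mode:
  fixes X :: "nat \<Rightarrow> 'b \<Rightarrow> 'a::real_normed_vector"
  assumes "is_mode p x" and "0 < L"
  shows "((\<lambda>n. measure M {\<omega> \<in> space M. real n * nn_higher_dist p L x X n \<omega> ^ k \<le> K})
           \<longlongrightarrow> 0) sequentially"
proof -
  let ?E = "\<lambda>n. {\<omega> \<in> space M. real n * nn_higher_dist p L x X n \<omega> ^ k \<le> K}"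
  obtain m where m: "0 < m" "\<And>n \<omega>. m \<le> nn_higher_dist p L x X n \<omega>"
    using nn_higher_dist_lower_bound_at_mode[OF assms] by blast
  have "eventually (\<lambda>n. K / m ^ k < real n) sequentially"
    using filterlim_real_sequentially unfolding filterlim_at_top_dense by blast
  then have "eventually (\<lambda>n. ?E n = {}) sequentially"
  proof eventually_elim
    case (elim n)
    have "K < real n * nn_higher_dist p L x X n \<omega> ^ k" for \<omega>
    proof -
      have "K < real n * m ^ k"
        using elim m(1) by (simp add: divide_less_eq mult.commute)
      also have "\<dots> \<le> real n * nn_higher_dist p L x X n \<omega> ^ k"
        using m by (intro mult_left_mono power_mono) auto
      finally show ?thesis .
    qed
    then show ?case
      by (simp add: not_le)
  qed
  then have "eventually (\<lambda>n. measure M (?E n) = 0) sequentially"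
    by (rule eventually_mono) (simp only: measure_empty)
  then show ?thesis
    by (rule tendsto_eventually)
qed

theorem theorem3:
  fixes M :: "'b measure"
    and X :: "nat \<Rightarrow> 'b \<Rightarrow> 'a::euclidean_space"
    and p :: "'a \<Rightarrow> real"
    and C :: "'a set"
    and a L \<tau> :: real
    and D1 :: "'a \<Rightarrow> ('a \<Rightarrow>\<^sub>L real)"
    and D2 :: "'a \<Rightarrow> ('a \<Rightarrow>\<^sub>L ('a \<Rightarrow>\<^sub>L real))"
    and D3 :: "'a \<Rightarrow> ('a \<Rightarrow>\<^sub>L ('a \<Rightarrow>\<^sub>L ('a \<Rightarrow>\<^sub>L real)))"
    and x :: 'a
  assumes prob: "prob_space M"
    and rv: "\<And>i. X i \<in> borel_measurable M"
    and indep: "prob_space.indep_vars M (\<lambda>_. borel) X UNIV"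
    and distr: "\<And>i. distr M borel (X i) = density lborel p"
    \<comment> \<open>(A1)\<close>
    and p_meas: "p \<in> borel_measurable borel"
    and p_nonneg: "\<And>y. p y \<ge> 0"
    and C_compact: "compact C"
    and p_supp: "\<And>y. y \<notin> C \<Longrightarrow> p y = 0"
    and p_bdd: "bounded (range p)"
    and p_cont: "continuous_on C p"
    and a_pos: "a > 0"
    and p_lower: "\<And>y. y \<in> C \<Longrightarrow> p y \<ge> a"
    \<comment> \<open>(A2): derivatives of order 1, 2, 3 on the interior of C, bounded and continuous\<close>
    and D1_deriv: "\<And>y. y \<in> interior C \<Longrightarrow> (p has_derivative blinfun_apply (D1 y)) (at y)"
    and D2_deriv: "\<And>y. y \<in> interior C \<Longrightarrow> (D1 has_derivative blinfun_apply (D2 y)) (at y)"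
    and D3_deriv: "\<And>y. y \<in> interior C \<Longrightarrow> (D2 has_derivative blinfun_apply (D3 y)) (at y)"
    and D1_cont: "continuous_on (interior C) D1"
    and D2_cont: "continuous_on (interior C) D2"
    and D3_cont: "continuous_on (interior C) D3"
    and D1_bdd: "bounded (D1 ` interior C)"
    and D2_bdd: "bounded (D2 ` interior C)"
    and D3_bdd: "bounded (D3 ` interior C)"
    \<comment> \<open>(A3): Morse with finitely many critical points\<close>
    and crit_finite: "finite {y \<in> interior C. D1 y = 0}"
    and morse: "\<And>y v. y \<in> interior C \<Longrightarrow> D1 y = 0 \<Longrightarrow> v \<noteq> 0 \<Longrightarrow> blinfun_apply (D2 y) v \<noteq> 0"
    \<comment> \<open>(A4')\<close>
    and tau: "0 < \<tau>" "\<tau> < 1"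
    and A4: "\<And>y. y \<in> C \<Longrightarrow> \<not> is_mode p y \<Longrightarrow>
              ((\<lambda>t. measure lborel ({z. p z > p y} \<inter> ball y t) / measure lborel (ball y t))
                 \<longlongrightarrow> \<tau>) (at_right 0)"
    and L_pos: "L > 0"
    and x_in: "x \<in> C"
  shows "(\<not> is_mode p x \<longrightarrow>
            weak_conv_m
              (\<lambda>n. distr M borel (\<lambda>\<omega>. real n * nn_higher_dist p L x X n \<omega> ^ DIM('a)))
              (density lborel (exponential_density (p x * \<tau> * measure lborel (ball (0::'a) 1)))))
       \<and> (is_mode p x \<longrightarrow>
            (\<forall>K::real. ((\<lambda>n. measure M {\<omega> \<in> space M.
                 real n * nn_higher_dist p L x X n \<omega> ^ DIM('a) \<le> K}) \<longlongrightarrow> 0) sequentially))"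
proof -
  interpret prob_space M
    by (rule prob)
  have H_borel: "{z. p x < p z} \<in> sets borel"
    using p_meas by measurable
  have H_sub_C: "{z. p x < p z} \<subseteq> C"
    using p_supp p_lower[OF x_in] a_pos by force
  show ?thesis
  proof (intro conjI impI)
    assume "\<not> is_mode p x"
    have "continuous (at x within {z. p x < p z}) p"
      using p_cont x_in H_sub_C by (meson continuous_on_eq_continuous_within continuous_within_subset)
    with H_borel have "((\<lambda>r. measure (density lborel p) ({z. p x < p z} \<inter> cball x r) / r ^ DIM('a))
        \<longlongrightarrow> p x * \<tau> * measure lborel (ball (0::'a) 1)) (at_right 0)"
      by (intro measure_density_inter_cball_tendsto p_meas p_nonneg A4 x_in \<open>\<not> is_mode p x\<close>)
    moreover have "0 < p x * \<tau> * measure lborel (ball (0::'a) 1)"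
      using p_lower[OF x_in] a_pos tau by (simp add: content_ball_pos)
    ultimately show "weak_conv_m
        (\<lambda>n. distr M borel (\<lambda>\<omega>. real n * nn_higher_dist p L x X n \<omega> ^ DIM('a)))
        (density lborel (exponential_density (p x * \<tau> * measure lborel (ball (0::'a) 1))))"
      by (intro weak_conv_scaled_nn_higher_dist[OF rv indep distr p_meas L_pos])
  next
    assume "is_mode p x"
    then show "\<forall>K::real. ((\<lambda>n. measure M {\<omega> \<in> space M.
        real n * nn_higher_dist p L x X n \<omega> ^ DIM('a) \<le> K}) \<longlongrightarrow> 0) sequentially"
      using measure_scaled_nn_higher_dist_le_at_mode[OF _ L_pos] by blast
  qed
qed

end
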